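(* In the setting below, the map $\phi:\bigoplus_{i=1}^nF_i\to H_1(\Gamma,\rho^\beta)$ is equivariant for the natural action of $u_k$ on the target, where $u_k$ acts on the source trivially on $F_i$ for $i\neq k$ and by multiplication by $\chi=\beta^T$ on $F_k$. Moreover $\phi$ is injective.
   Context: Setting: $Q=\{q_1,\ldots,q_n\}\subset\mathbb{P}^1$, $b,c$ further points; $\Gamma=\pi_1(\mathbb{P}^1-Q-\{c\},b)$ with generators $\alpha_i$ (around $q_i$), $\delta$ (around $c$), relation $\delta\alpha_1\cdots\alpha_n=1$; $\delta_1=\delta$, $\delta_{i+1}=\alpha_i\delta_i\alpha_i^{-1}$; $u_k$ acts on $\Gamma$ by $\mu_k$ with $\mu_k(\alpha_i)=\alpha_i$ ($i\ne k$), $\mu_k(\alpha_k)=\delta_k^{-1}\alpha_k\delta_k$, $\mu_k(\delta_k)=\delta_k^{-1}\alpha_k^{-1}\delta_k\alpha_k\delta_k$. $\rho:\Gamma\to GL(V)$ with $\rho(\delta)=1$ and semisimple $\rho(\alpha_i)$; $\beta^{H_i},\beta^T\in\mathbb{C}^*$ with $\beta^T\prod\beta^{H_i}=1$ and $\beta^T\ne1$; $\rho^\beta(\alpha_i)=\beta^{H_i}\rho(\alpha_i)$, $\rho^\beta(\delta)=\beta^T$. $C_1/\partial C_2$: span of $G[\gamma,w]$, linear in $w$, with $G[\xi\gamma,w]=G[\gamma,w]+G[\xi,\rho^\beta(\gamma)w]$; $H_1(\Gamma,\rho^\beta)=\ker(\partial:G[\gamma,w]\mapsto\rho^\beta(\gamma)w-w)$;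 natural action $G[\gamma,w]\mapsto G[\mu_k(\gamma),w]$. $F_i\subset V$ is the space of vectors fixed by $\rho^\beta(\alpha_i)$, and $\phi_i(f)=G[\alpha_i,f]$, $\phi=\sum\phi_i$. *)

theory Defs
  imports "HOL-Analysis.Analysis" "HOL-Library.Function_Algebras"
begin

text \<open>Gamma = pi_1(P^1 - Q - {c}, b) = < alpha_1..alpha_n, delta | delta alpha_1 ... alpha_n = 1 >,
  which is free on alpha_1..alpha_n.  A letter (i, False) is alpha_i, (i, True) is alpha_i^-1.\<close>

type_synonym word = "(nat \<times> bool) list"

definition gen_inv :: "nat \<times> bool \<Rightarrow> nat \<times> bool" where
  "gen_inv x = (fst x, \<not> snd x)"

fun push :: "nat \<times> bool \<Rightarrow> word \<Rightarrow> word" where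
  "push a [] = [a]"
| "push a (b # ys) = (if fst a = fst b \<and> snd a \<noteq> snd b then ys else a # b # ys)"

definition reduce :: "word \<Rightarrow> word" where
  "reduce xs = foldr push xs []"

definition reduced :: "word \<Rightarrow> bool" where
  "reduced xs = (\<forall>i. Suc i < length xs \<longrightarrow>
      \<not> (fst (xs ! i) = fst (xs ! Suc i) \<and> snd (xs ! i) \<noteq> snd (xs ! Suc i)))"

definition FG :: "nat \<Rightarrow> word set" where
  "FG n = {w. reduced w \<and> (\<forall>x\<in>set w. fst x \<in> {1..n})}"

definition fg_mult :: "word \<Rightarrow> word \<Rightarrow> word" where
  "fg_mult x y = reduce (x @ y)"

definition fg_inv :: "word \<Rightarrow> word" where
  "fg_inv x = rev (map gen_inv x)"

definition alpha :: "nat \<Rightarrow> word" where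
  "alpha i = [(i, False)]"

definition delta :: "nat \<Rightarrow> word" where
  "delta n = fg_inv (map (\<lambda>i. (i, False)) [1..<Suc n])"

text \<open>deltas n j = delta_(j+1): delta_1 = delta, delta_(i+1) = alpha_i delta_i alpha_i^-1\<close>
fun deltas :: "nat \<Rightarrow> nat \<Rightarrow> word" where
  "deltas n 0 = delta n"
| "deltas n (Suc j) = fg_mult (fg_mult (alpha (Suc j)) (deltas n j)) (fg_inv (alpha (Suc j)))"

definition delta_k :: "nat \<Rightarrow> nat \<Rightarrow> word" where
  "delta_k n k = deltas n (k - 1)"

definition mu_gen :: "nat \<Rightarrow> nat \<Rightarrow> nat \<Rightarrow> word" where
  "mu_gen n k i = (if i = k then fg_mult (fg_mult (fg_inv (delta_k n k)) (alpha k)) (delta_k n k)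
                   else alpha i)"

definition mu :: "nat \<Rightarrow> nat \<Rightarrow> word \<Rightarrow> word" where
  "mu n k w = reduce (concat (map (\<lambda>(i, b). if b then fg_inv (mu_gen n k i) else mu_gen n k i) w))"

definition rep :: "(nat \<Rightarrow> complex^'d^'d) \<Rightarrow> word \<Rightarrow> complex^'d^'d" where
  "rep M w = foldr (\<lambda>(i, b) acc. (if b then matrix_inv (M i) else M i) ** acc) w (mat 1)"

text \<open>rho^beta(alpha_i) = beta^(H_i) rho(alpha_i)\<close>
definition twist :: "(nat \<Rightarrow> complex^'d^'d) \<Rightarrow> (nat \<Rightarrow> complex) \<Rightarrow> nat \<Rightarrow> complex^'d^'d" where
  "twist A bH i = mat (bH i) ** A i"

definition semisimple :: "complex^'d^'d \<Rightarrow> bool" where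
  "semisimple A = (\<exists>P::complex^'d^'d. invertible P \<and>
      (\<forall>i j. i \<noteq> j \<longrightarrow> (matrix_inv P ** A ** P) $ i $ j = 0))"

text \<open>The chain space C_1 is modelled as complex-valued functions on Gamma \<times> V, the symbol
  [gamma, w] being the indicator of (gamma, w).  The class G[gamma,w] in C_1/\<partial>C_2 is the
  class of [gamma,w] modulo the subspace rel_space spanned by the linearity relations in w and the
  cocycle relations G[xi gamma, w] = G[gamma, w] + G[xi, rho^beta(gamma) w].\<close>

definition sym :: "word \<Rightarrow> complex^'d \<Rightarrow> (word \<times> (complex^'d) \<Rightarrow> complex)" where
  "sym g w = (\<lambda>p. if p = (g, w) then 1 else 0)"

definition cscale :: "complex \<Rightarrow> ('a \<Rightarrow> complex) \<Rightarrow> ('a \<Rightarrow> complex)" where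
  "cscale c f = (\<lambda>p. c * f p)"

definition rel_gens :: "nat \<Rightarrow> (nat \<Rightarrow> complex^'d^'d) \<Rightarrow> (word \<times> (complex^'d) \<Rightarrow> complex) set" where
  "rel_gens n R =
     {sym g (a *s v + b *s w) - cscale a (sym g v) - cscale b (sym g w)
        | g a b v w. g \<in> FG n}
   \<union> {sym (fg_mult xi g) w - sym g w - sym xi (rep R g *v w)
        | xi g w. xi \<in> FG n \<and> g \<in> FG n}"

definition rel_space :: "nat \<Rightarrow> (nat \<Rightarrow> complex^'d^'d) \<Rightarrow> (word \<times> (complex^'d) \<Rightarrow> complex) set" where
  "rel_space n R = module.span cscale (rel_gens n R)"

definition eqC :: "nat \<Rightarrow> (nat \<Rightarrow> complex^'d^'d) \<Rightarrow> (word \<times> (complex^'d) \<Rightarrow> complex)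
                   \<Rightarrow> (word \<times> (complex^'d) \<Rightarrow> complex) \<Rightarrow> bool" where
  "eqC n R x y = (x - y \<in> rel_space n R)"

definition phi :: "nat \<Rightarrow> (nat \<Rightarrow> complex^'d) \<Rightarrow> (word \<times> (complex^'d) \<Rightarrow> complex)" where
  "phi n f = (\<Sum>i=1..n. sym (alpha i) (f i))"

definition Fix :: "complex^'d^'d \<Rightarrow> (complex^'d) set" where
  "Fix B = {v. B *v v = v}"

end

theory Submission
  imports Defs
begin

text \<open>
  Equivariance: \<open>\<mu>\<^sub>k\<close> fixes \<open>\<alpha>\<^sub>i\<close> for \<open>i \<noteq> k\<close>, so only the \<open>k\<close>-th summand changes. Twisting
  multiplies \<open>\<rho>(\<delta>) = 1\<close> by \<open>\<Prod>\<^sub>i (\<beta>\<^bsup>H\<^sub>i\<^esub>)\<^sup>-\<^sup>1 = \<beta>\<^sup>T\<close>, so \<open>\<rho>\<^sup>\<beta>(\<delta>)\<close> is the scalar \<open>\<beta>\<^sup>T\<close>, and so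
  is \<open>\<rho>\<^sup>\<beta>(\<delta>\<^sub>k)\<close>, \<open>\<delta>\<^sub>k\<close> being conjugate to \<open>\<delta>\<close>. The cocycle relations for the products
  \<open>(\<delta>\<^sub>k\<^sup>-\<^sup>1\<alpha>\<^sub>k)\<delta>\<^sub>k\<close>, \<open>\<delta>\<^sub>k\<^sup>-\<^sup>1\<alpha>\<^sub>k\<close> and \<open>\<delta>\<^sub>k\<^sup>-\<^sup>1\<delta>\<^sub>k\<close>, together with \<open>G[1, f] = 0\<close>, then give
  \<open>G[\<delta>\<^sub>k\<^sup>-\<^sup>1\<alpha>\<^sub>k\<delta>\<^sub>k, f] = G[\<alpha>\<^sub>k, \<beta>\<^sup>T f]\<close> whenever \<open>\<rho>\<^sup>\<beta>(\<alpha>\<^sub>k) f = f\<close>.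

  Injectivity: \<open>\<Gamma>\<close> is free on the \<open>\<alpha>\<^sub>i\<close>. For each \<open>t\<close> the Fox derivative \<open>\<partial>/\<partial>\<alpha>\<^sub>t\<close> pushed
  through \<open>\<rho>\<^sup>\<beta>\<close> is a crossed homomorphism \<open>D\<^sub>t(\<xi>\<gamma>) = D\<^sub>t(\<gamma>) + D\<^sub>t(\<xi>) \<rho>\<^sup>\<beta>(\<gamma>)\<close>, so
  \<open>[\<gamma>, w] \<mapsto> D\<^sub>t(\<gamma>) w\<close> respects the relations of \<open>C\<^sub>1/\<partial>C\<^sub>2\<close> and induces a linear map sending
  \<open>\<phi>(f)\<close> to \<open>f\<^sub>t\<close>.
\<close>

section \<open>Free reduction\<close>

abbreviation cancels :: "nat \<times> bool \<Rightarrow> nat \<times> bool \<Rightarrow> bool" where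
  "cancels a b \<equiv> fst a = fst b \<and> snd a \<noteq> snd b"

lemma reduced_Cons:
  "reduced (a # ys) \<longleftrightarrow> reduced ys \<and> (ys = [] \<or> \<not> cancels a (hd ys))"
  unfolding reduced_def
proof (intro iffI conjI allI impI)
  fix i
  assume r: "\<forall>i. Suc i < length (a # ys) \<longrightarrow> \<not> cancels ((a # ys) ! i) ((a # ys) ! Suc i)"
  show "Suc i < length ys \<Longrightarrow> \<not> cancels (ys ! i) (ys ! Suc i)"
    using r[rule_format, of "Suc i"] by simp
  show "ys = [] \<or> \<not> cancels a (hd ys)"
    using r[rule_format, of 0] by (cases ys) auto
next
  fix i
  assume "(\<forall>i. Suc i < length ys \<longrightarrow> \<not> cancels (ys ! i) (ys ! Suc i)) \<and> (ys = [] \<or> \<not> cancels a (hd ys))"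
    and "Suc i < length (a # ys)"
  then show "\<not> cancels ((a # ys) ! i) ((a # ys) ! Suc i)"
    by (cases i; cases ys) auto
qed

lemma reduced_Nil [simp]: "reduced []"
  by (simp add: reduced_def)

lemma reduced_push: "reduced ys \<Longrightarrow> reduced (push a ys)"
  by (cases ys) (auto simp: reduced_Cons)

lemma reduced_reduce: "reduced (reduce xs)"
  by (induction xs) (simp_all add: reduce_def reduced_push)

lemma reduce_reduced: "reduced xs \<Longrightarrow> reduce xs = xs"
proof (induction xs)
  case (Cons a xs)
  then have "reduce xs = xs" by (simp add: reduced_Cons)
  with Cons.prems show ?case by (cases xs) (auto simp: reduce_def reduced_Cons)
qed (simp add: reduce_def)

lemma set_reduce: "set (reduce xs) \<subseteq> set xs"
proof (induction xs)
  case (Cons a xs)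
  have "set (push a ys) \<subseteq> insert a (set ys)" for ys by (cases ys) auto
  with Cons show ?case by (fastforce simp: reduce_def)
qed (simp add: reduce_def)

lemma reduced_fg_inv: "reduced d \<Longrightarrow> reduced (fg_inv d)"
  unfolding reduced_def fg_inv_def
proof (intro allI impI)
  fix i
  assume r: "\<forall>i. Suc i < length d \<longrightarrow> \<not> cancels (d ! i) (d ! Suc i)"
    and i: "Suc i < length (rev (map gen_inv d))"
  then have "length d - Suc i = Suc (length d - Suc (Suc i))" by simp
  with r[rule_format, of "length d - Suc (Suc i)"] i
  show "\<not> cancels (rev (map gen_inv d) ! i) (rev (map gen_inv d) ! Suc i)"
    by (auto simp: rev_nth gen_inv_def)
qed

lemma fg_mult_fg_inv_left: "reduced d \<Longrightarrow> fg_mult (fg_inv d) d = []"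
proof -
  have "foldr push (rev (map gen_inv d)) d = []" for d
    by (induction d) (auto simp: gen_inv_def)
  then show "reduced d \<Longrightarrow> fg_mult (fg_inv d) d = []"
    by (simp add: fg_mult_def fg_inv_def reduce_def reduce_reduced[unfolded reduce_def])
qed

lemma FG_fg_mult: "x \<in> FG n \<Longrightarrow> y \<in> FG n \<Longrightarrow> fg_mult x y \<in> FG n"
  using set_reduce[of "x @ y"] by (auto simp: FG_def fg_mult_def reduced_reduce)

lemma FG_fg_inv: "x \<in> FG n \<Longrightarrow> fg_inv x \<in> FG n"
  by (auto simp: FG_def fg_inv_def gen_inv_def reduced_fg_inv[unfolded fg_inv_def])

lemma FG_alpha: "i \<in> {1..n} \<Longrightarrow> alpha i \<in> FG n"
  by (simp add: FG_def alpha_def reduced_def)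

lemma FG_Nil: "[] \<in> FG n"
  by (simp add: FG_def)

lemma delta_Suc: "delta (Suc n) = (Suc n, True) # delta n"
  by (simp add: delta_def fg_inv_def gen_inv_def)

lemma FG_delta: "delta n \<in> FG n"
proof -
  have "reduced (delta n)"
    unfolding delta_def by (rule reduced_fg_inv) (simp add: reduced_def)
  moreover have "\<forall>x\<in>set (delta n). fst x \<in> {1..n}"
    by (auto simp: delta_def fg_inv_def gen_inv_def)
  ultimately show ?thesis by (simp add: FG_def)
qed

lemma FG_deltas: "j < n \<Longrightarrow> deltas n j \<in> FG n"
  by (induction j) (auto simp: FG_delta FG_fg_mult FG_fg_inv FG_alpha)

lemma foldr_push:
  assumes "\<And>b y. cancels a b \<Longrightarrow> h a (h b y) = y"
  shows "foldr h (push a ys) z = h a (foldr h ys z)"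
  using assms by (cases ys) auto

lemma foldr_reduce:
  assumes "\<And>a b y. a \<in> set xs \<Longrightarrow> cancels a b \<Longrightarrow> h a (h b y) = y"
  shows "foldr h (reduce xs) z = foldr h xs z"
  using assms
proof (induction xs)
  case (Cons a xs)
  then have "foldr h (push a (reduce xs)) z = h a (foldr h (reduce xs) z)"
    by (intro foldr_push) simp
  with Cons show ?case by (simp add: reduce_def)
qed (simp add: reduce_def)

section \<open>Scalar matrices and inverses\<close>

lemma matrix_inv_right: "invertible B \<Longrightarrow> B ** matrix_inv B = mat 1"
  and matrix_inv_left: "invertible B \<Longrightarrow> matrix_inv B ** B = mat 1"
  unfolding invertible_def matrix_inv_def by (metis (mono_tags, lifting) someI_ex)+

lemma matrix_inv_eqI:
  fixes B C :: "'a::field^'n^'n"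
  assumes "B ** C = mat 1"
  shows "matrix_inv B = C"
proof -
  have "invertible B"
    using assms invertible_right_inverse by blast
  then show ?thesis
    by (metis assms matrix_inv_left matrix_mul_assoc matrix_mul_lid matrix_mul_rid)
qed

lemma matrix_add_rdistrib: "(A + B) ** C = A ** C + B ** C"
  by (simp add: matrix_matrix_mult_def vec_eq_iff sum.distrib distrib_right)

lemma matrix_neg_mult: "(- A :: 'a::ring_1^'n^'m) ** C = - (A ** C)"
  by (simp add: matrix_matrix_mult_def vec_eq_iff sum_negf)

lemma mat_mult_left: "mat c ** B = (\<chi> i j. c * B $ i $ j)"
  by (simp add: matrix_matrix_mult_def mat_def vec_eq_iff if_distrib if_distribR sum.delta cong: if_cong)

lemma mat_mult_commute: "mat c ** (B :: 'a::comm_semiring_1^'n^'n) = B ** mat c"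
  by (simp add: mat_mult_left matrix_matrix_mult_def mat_def vec_eq_iff if_distrib if_distribR
      sum.delta' mult.commute cong: if_cong)

lemma mat_mult_mat: "mat a ** mat b = mat (a * b)"
  by (simp add: mat_mult_left vec_eq_iff) (simp add: mat_def)

lemma invertible_mat: "(c::'a::field) \<noteq> 0 \<Longrightarrow> invertible (mat c :: 'a^'n^'n)"
  unfolding invertible_def by (rule exI[of _ "mat (inverse c)"]) (simp add: mat_mult_mat)

lemma mat_mult_vec: "mat c *v v = c *s v"
  by (simp add: matrix_vector_mult_def mat_def vec_eq_iff if_distrib if_distribR sum.delta cong: if_cong)

lemma mat_mult_interchange:
  fixes B :: "'a::comm_semiring_1^'n^'n"
  shows "mat a ** B ** (mat b ** C) = mat (a * b) ** (B ** C)"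
proof -
  have "mat a ** B ** (mat b ** C) = mat a ** (B ** mat b) ** C"
    by (simp add: matrix_mul_assoc)
  also have "\<dots> = mat a ** mat b ** B ** C"
    by (simp add: mat_mult_commute[of b B, symmetric] matrix_mul_assoc)
  finally show ?thesis
    by (simp add: mat_mult_mat matrix_mul_assoc)
qed

lemma matrix_inv_scalar_mult:
  fixes B :: "'a::field^'n^'n"
  assumes "c \<noteq> 0" "invertible B"
  shows "matrix_inv (mat c ** B) = mat (inverse c) ** matrix_inv B"
  using assms by (intro matrix_inv_eqI) (simp add: mat_mult_interchange matrix_inv_right)

section \<open>Representations and Fox derivatives of words\<close>

definition rep_letter :: "(nat \<Rightarrow> 'a::semiring_1^'n^'n) \<Rightarrow> nat \<times> bool \<Rightarrow> 'a^'n^'n" where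
  "rep_letter R a = (if snd a then matrix_inv (R (fst a)) else R (fst a))"

lemma rep_Nil [simp]: "rep R [] = mat 1"
  by (simp add: rep_def)

lemma rep_Cons [simp]: "rep R (a # w) = rep_letter R a ** rep R w"
  by (cases a) (simp add: rep_def rep_letter_def)

lemma rep_append: "rep R (xs @ ys) = rep R xs ** rep R ys"
  by (induction xs) (simp_all add: matrix_mul_assoc)

lemma foldr_rep_letter: "foldr (\<lambda>a M. rep_letter R a ** M) w M = rep R w ** M"
  by (induction w) (simp_all add: matrix_mul_assoc)

lemma rep_letter_cancel:
  assumes "invertible (R (fst a))" "cancels a b"
  shows "rep_letter R a ** rep_letter R b = mat 1"
  using assms by (cases "snd a") (simp_all add: rep_letter_def matrix_inv_left matrix_inv_right)

lemma rep_fg_mult: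
  assumes R: "\<And>i. i \<in> {1..n} \<Longrightarrow> invertible (R i)" and "x \<in> FG n" "y \<in> FG n"
  shows "rep R (fg_mult x y) = rep R x ** rep R y"
proof -
  let ?h = "\<lambda>a M. rep_letter R a ** M"
  have "foldr ?h (reduce (x @ y)) (mat 1) = foldr ?h (x @ y) (mat 1)"
  proof (rule foldr_reduce)
    fix a b M
    assume "a \<in> set (x @ y)" "cancels a b"
    with assms have "rep_letter R a ** rep_letter R b = mat 1"
      by (intro rep_letter_cancel) (auto simp: FG_def)
    then show "?h a (?h b M) = M" by (simp add: matrix_mul_assoc)
  qed
  then show ?thesis by (simp add: fg_mult_def foldr_rep_letter rep_append)
qed

text \<open>The Fox derivative \<open>\<partial>/\<partial>\<alpha>\<^sub>t\<close> pushed through \<open>R\<close>, in the right-handed convention that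
  matches the cocycle relation of \<open>C\<^sub>1/\<partial>C\<^sub>2\<close>.\<close>

definition fox_letter :: "nat \<Rightarrow> (nat \<Rightarrow> 'a::ring_1^'n^'n) \<Rightarrow> nat \<times> bool \<Rightarrow> 'a^'n^'n" where
  "fox_letter t R a = (if fst a \<noteq> t then 0 else if snd a then - matrix_inv (R t) else mat 1)"

fun fox :: "nat \<Rightarrow> (nat \<Rightarrow> complex^'d^'d) \<Rightarrow> word \<Rightarrow> complex^'d^'d" where
  "fox t R [] = 0"
| "fox t R (a # w) = fox t R w + fox_letter t R a ** rep R w"

lemma fox_alpha: "fox t R (alpha i) = (if i = t then mat 1 else 0)"
  by (simp add: alpha_def fox_letter_def)

lemma fox_append: "fox t R (xs @ ys) = fox t R ys + fox t R xs ** rep R ys"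
  by (induction xs) (simp_all add: rep_append matrix_add_rdistrib matrix_mul_assoc algebra_simps)

lemma foldr_fox_letter:
  "foldr (\<lambda>a (D, M). (D + fox_letter t R a ** M, rep_letter R a ** M)) w (D, M)
     = (D + fox t R w ** M, rep R w ** M)"
  by (induction w) (simp_all add: matrix_add_rdistrib matrix_mul_assoc algebra_simps)

lemma fox_letter_cancel:
  assumes "invertible (R (fst a))" "cancels a b"
  shows "fox_letter t R b + fox_letter t R a ** rep_letter R b = 0"
  using assms
  by (cases "snd a") (auto simp: fox_letter_def rep_letter_def matrix_neg_mult matrix_inv_left)

lemma fox_fg_mult:
  assumes R: "\<And>i. i \<in> {1..n} \<Longrightarrow> invertible (R i)" and "x \<in> FG n" "y \<in> FG n"
  shows "fox t R (fg_mult x y) = fox t R y + fox t R x ** rep R y"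
proof -
  let ?h = "\<lambda>a (D, M). (D + fox_letter t R a ** M, rep_letter R a ** M)"
  have "foldr ?h (reduce (x @ y)) (0, mat 1) = foldr ?h (x @ y) (0, mat 1)"
  proof (rule foldr_reduce)
    fix a b DM
    assume "a \<in> set (x @ y)" "cancels a b"
    with assms have "rep_letter R a ** rep_letter R b = mat 1"
      and "fox_letter t R b + fox_letter t R a ** rep_letter R b = 0"
      by (intro rep_letter_cancel fox_letter_cancel; auto simp: FG_def)+
    then show "?h a (?h b DM) = DM"
      by (cases DM) (simp add: matrix_mul_assoc add.assoc flip: matrix_add_rdistrib)
  qed
  then show ?thesis by (simp add: fg_mult_def foldr_fox_letter fox_append)
qed

lemma rep_twist_delta:
  assumes "\<And>i. i \<in> {1..m} \<Longrightarrow> bH i \<noteq> 0" "\<And>i. i \<in> {1..m} \<Longrightarrow> invertible (A i)"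
  shows "rep (twist A bH) (delta m) = mat (\<Prod>i=1..m. inverse (bH i)) ** rep A (delta m)"
  using assms
proof (induction m)
  case 0
  then show ?case by (simp add: delta_def fg_inv_def)
next
  case (Suc m)
  let ?b = "inverse (bH (Suc m))" and ?P = "\<Prod>i=1..m. inverse (bH i)"
  have IH: "rep (twist A bH) (delta m) = mat ?P ** rep A (delta m)"
    using Suc.prems by (intro Suc.IH) auto
  have "rep_letter (twist A bH) (Suc m, True) = mat ?b ** matrix_inv (A (Suc m))"
    using Suc.prems by (simp add: rep_letter_def twist_def matrix_inv_scalar_mult)
  then have "rep (twist A bH) (delta (Suc m))
        = mat ?b ** matrix_inv (A (Suc m)) ** (mat ?P ** rep A (delta m))"
    by (simp add: delta_Suc IH)
  also have "\<dots> = mat (?b * ?P) ** (matrix_inv (A (Suc m)) ** rep A (delta m))"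
    by (rule mat_mult_interchange)
  finally show ?case
    by (simp add: delta_Suc rep_letter_def prod.nat_ivl_Suc' mult.commute)
qed

lemma rep_deltas:
  assumes R: "\<And>i. i \<in> {1..n} \<Longrightarrow> invertible (R i)" and "rep R (delta n) = mat c" "j < n"
  shows "rep R (deltas n j) = mat c"
  using assms(3)
proof (induction j)
  case 0
  then show ?case using assms(2) by simp
next
  case (Suc j)
  let ?a = "alpha (Suc j)"
  have FG: "?a \<in> FG n" "fg_inv ?a \<in> FG n" "deltas n j \<in> FG n"
    using Suc.prems by (auto simp: FG_alpha FG_fg_inv FG_deltas)
  have "rep R (deltas n (Suc j)) = rep R ?a ** rep R (deltas n j) ** rep R (fg_inv ?a)"
    using rep_fg_mult[OF R FG_fg_mult[OF FG(1,3)] FG(2)] rep_fg_mult[OF R FG(1,3)] by simp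
  also have "\<dots> = R (Suc j) ** mat c ** matrix_inv (R (Suc j))"
    using Suc by (simp add: alpha_def fg_inv_def gen_inv_def rep_letter_def)
  also have "\<dots> = mat c ** (R (Suc j) ** matrix_inv (R (Suc j)))"
    by (simp add: mat_mult_commute[of c "R (Suc j)", symmetric] matrix_mul_assoc)
  finally show ?case
    using R Suc.prems by (simp add: matrix_inv_right)
qed

section \<open>Equivariance\<close>

interpretation cscale: module "cscale :: complex \<Rightarrow> ('a \<Rightarrow> complex) \<Rightarrow> 'a \<Rightarrow> complex"
  by unfold_locales (auto simp: cscale_def fun_eq_iff algebra_simps)

lemma cocycle_in_rel_space:
  "xi \<in> FG n \<Longrightarrow> g \<in> FG n \<Longrightarrow> sym (fg_mult xi g) w - sym g w - sym xi (rep R g *v w) \<in> rel_space n R"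
  unfolding rel_space_def rel_gens_def by (rule cscale.span_base) blast

lemma sym_Nil_in_rel_space: "sym [] w \<in> rel_space n R"
proof -
  have "sym (fg_mult [] []) w - sym [] w - sym [] (rep R [] *v w) \<in> rel_space n R"
    by (rule cocycle_in_rel_space) (simp_all add: FG_Nil)
  then have "- sym [] w \<in> rel_space n R"
    by (simp add: fg_mult_def reduce_def)
  then show ?thesis
    unfolding rel_space_def using cscale.span_neg by fastforce
qed

lemma eqC_conjugate_alpha:
  assumes d: "d \<in> FG n" "rep R d = mat c" and i: "i \<in> {1..n}" and v: "R i *v v = v"
  shows "eqC n R (sym (alpha i) (c *s v)) (sym (fg_mult (fg_mult (fg_inv d) (alpha i)) d) v)"
proof -
  let ?a = "alpha i" and ?d' = "fg_inv d"
  let ?x = "fg_mult ?d' ?a"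
  have FG: "?a \<in> FG n" "?d' \<in> FG n" "?x \<in> FG n"
    using d i by (simp_all add: FG_alpha FG_fg_inv FG_fg_mult)
  have rel_xd: "sym (fg_mult ?x d) v - sym d v - sym ?x (c *s v) \<in> rel_space n R"
    using cocycle_in_rel_space[OF FG(3) d(1), of v R] d by (simp add: mat_mult_vec)
  have rel_d'a: "sym ?x (c *s v) - sym ?a (c *s v) - sym ?d' (c *s v) \<in> rel_space n R"
    using cocycle_in_rel_space[OF FG(2,1), of "c *s v" R] v
    by (simp add: alpha_def rep_letter_def vector_scalar_commute)
  have rel_d'd: "sym [] v - sym d v - sym ?d' (c *s v) \<in> rel_space n R"
    using cocycle_in_rel_space[OF FG(2) d(1), of v R] d
    by (simp add: mat_mult_vec fg_mult_fg_inv_left FG_def)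
  have "sym ?a (c *s v) - sym (fg_mult ?x d) v
        = (sym [] v - sym d v - sym ?d' (c *s v))
          - (sym (fg_mult ?x d) v - sym d v - sym ?x (c *s v))
          - (sym ?x (c *s v) - sym ?a (c *s v) - sym ?d' (c *s v)) - sym [] v"
    by (simp add: algebra_simps)
  also have "\<dots> \<in> rel_space n R"
    using rel_xd rel_d'a rel_d'd sym_Nil_in_rel_space
    unfolding rel_space_def by (meson cscale.span_diff)
  finally show ?thesis
    by (simp add: eqC_def)
qed

lemma mu_alpha:
  "mu n k (alpha i)
     = (if i = k then fg_mult (fg_mult (fg_inv (delta_k n k)) (alpha k)) (delta_k n k) else alpha i)"
  by (cases "i = k")
    (simp_all add: mu_def mu_gen_def alpha_def fg_mult_def reduce_reduced reduced_reduce,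
     simp add: reduce_def)

lemma phi_equivariant:
  assumes k: "k \<in> {1..n}" and d: "delta_k n k \<in> FG n" "rep R (delta_k n k) = mat c"
    and f: "\<forall>i\<in>{1..n}. f i \<in> Fix (R i)"
  shows "eqC n R (phi n (f(k := c *s f k))) (\<Sum>i=1..n. sym (mu n k (alpha i)) (f i))"
proof -
  have "phi n (f(k := c *s f k)) - (\<Sum>i=1..n. sym (mu n k (alpha i)) (f i))
        = (\<Sum>i=1..n. sym (alpha i) ((f(k := c *s f k)) i) - sym (mu n k (alpha i)) (f i))"
    by (simp add: phi_def sum_subtractf)
  also have "\<dots> \<in> rel_space n R"
    unfolding rel_space_def
  proof (rule cscale.span_sum)
    fix i
    assume "i \<in> {1..n}"
    then show "sym (alpha i) ((f(k := c *s f k)) i) - sym (mu n k (alpha i)) (f i)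
               \<in> cscale.span (rel_gens n R)"
      using eqC_conjugate_alpha[OF d k, of "f k"] f k
      by (auto simp: mu_alpha eqC_def rel_space_def Fix_def cscale.span_zero)
  qed
  finally show ?thesis
    by (simp add: eqC_def)
qed

section \<open>Injectivity\<close>

definition supp :: "('a \<Rightarrow> complex) \<Rightarrow> 'a set" where
  "supp x = {p. x p \<noteq> 0}"

text \<open>It is only
  meaningful on finitely supported chains: on the others the sum is \<open>0\<close> by convention.\<close>

definition lin_ext :: "('a \<Rightarrow> complex^'n) \<Rightarrow> ('a \<Rightarrow> complex) \<Rightarrow> complex^'n" where
  "lin_ext c x = (\<Sum>p\<in>supp x. x p *s c p)"

lemma finite_supp_sym [simp]: "finite (supp (sym g w))"
  by (rule finite_subset[of _ "{(g, w)}"]) (auto simp: supp_def sym_def)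

lemma finite_supp_add [simp]: "finite (supp x) \<Longrightarrow> finite (supp y) \<Longrightarrow> finite (supp (x + y))"
  by (rule finite_subset[of _ "supp x \<union> supp y"]) (auto simp: supp_def)

lemma finite_supp_diff [simp]: "finite (supp x) \<Longrightarrow> finite (supp y) \<Longrightarrow> finite (supp (x - y))"
  by (rule finite_subset[of _ "supp x \<union> supp y"]) (auto simp: supp_def)

lemma finite_supp_cscale [simp]: "finite (supp x) \<Longrightarrow> finite (supp (cscale a x))"
  by (rule finite_subset[of _ "supp x"]) (auto simp: supp_def cscale_def)

lemma lin_ext_eq_sum: "finite T \<Longrightarrow> supp x \<subseteq> T \<Longrightarrow> lin_ext c x = (\<Sum>p\<in>T. x p *s c p)"
  unfolding lin_ext_def by (rule sum.mono_neutral_left) (auto simp: supp_def)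

lemma lin_ext_add:
  assumes "finite (supp x)" "finite (supp y)"
  shows "lin_ext c (x + y) = lin_ext c x + lin_ext c y"
proof -
  let ?T = "supp x \<union> supp y"
  have "supp (x + y) \<subseteq> ?T" "supp x \<subseteq> ?T" "supp y \<subseteq> ?T"
    by (auto simp: supp_def)
  with assms show ?thesis
    by (simp add: lin_ext_eq_sum[of ?T] vector_sadd_rdistrib sum.distrib)
qed

lemma lin_ext_diff:
  assumes "finite (supp x)" "finite (supp y)"
  shows "lin_ext c (x - y) = lin_ext c x - lin_ext c y"
proof -
  let ?T = "supp x \<union> supp y"
  have "supp (x - y) \<subseteq> ?T" "supp x \<subseteq> ?T" "supp y \<subseteq> ?T"
    by (auto simp: supp_def)
  with assms show ?thesis
    by (simp add: lin_ext_eq_sum[of ?T] vector_sub_rdistrib sum_subtractf)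
qed

lemma lin_ext_cscale:
  assumes "finite (supp x)"
  shows "lin_ext c (cscale a x) = a *s lin_ext c x"
proof -
  have "supp (cscale a x) \<subseteq> supp x"
    by (auto simp: supp_def cscale_def)
  with assms show ?thesis
    by (simp add: lin_ext_eq_sum[of "supp x"] cscale_def vec.scale_sum_right vector_smult_assoc)
qed

lemma lin_ext_sym: "lin_ext c (sym g w) = c (g, w)"
  by (subst lin_ext_eq_sum[of "{(g, w)}"]) (auto simp: supp_def sym_def)

lemma finite_supp_sum:
  "finite I \<Longrightarrow> (\<And>i. i \<in> I \<Longrightarrow> finite (supp (x i))) \<Longrightarrow> finite (supp (\<Sum>i\<in>I. x i))"
  by (induction I rule: finite_induct) (simp add: supp_def, simp)

lemma lin_ext_sum:
  assumes "finite I" "\<And>i. i \<in> I \<Longrightarrow> finite (supp (x i))"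
  shows "lin_ext c (\<Sum>i\<in>I. x i) = (\<Sum>i\<in>I. lin_ext c (x i))"
  using assms
  by (induction I rule: finite_induct) (simp_all add: lin_ext_add finite_supp_sum, simp add: lin_ext_def supp_def)

lemma lin_ext_rel_space:
  assumes lin: "\<And>g a b v w. g \<in> FG n \<Longrightarrow> c (g, a *s v + b *s w) = a *s c (g, v) + b *s c (g, w)"
    and cocycle: "\<And>xi g w. xi \<in> FG n \<Longrightarrow> g \<in> FG n \<Longrightarrow>
                    c (fg_mult xi g, w) = c (g, w) + c (xi, rep R g *v w)"
    and x: "x \<in> rel_space n R"
  shows "finite (supp x) \<and> lin_ext c x = 0"
  using x unfolding rel_space_def
proof (induction rule: cscale.span_induct_alt)
  case base
  then show ?case by (simp add: supp_def lin_ext_def)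
next
  case (step a x y)
  from step.hyps(1) have "finite (supp x) \<and> lin_ext c x = 0"
    unfolding rel_gens_def
  proof (elim UnE CollectE exE conjE)
    fix g a b v w
    assume "x = sym g (a *s v + b *s w) - cscale a (sym g v) - cscale b (sym g w)" "g \<in> FG n"
    then show ?thesis
      by (simp add: lin_ext_diff lin_ext_cscale lin_ext_sym lin)
  next
    fix xi g w
    assume "x = sym (fg_mult xi g) w - sym g w - sym xi (rep R g *v w)" "xi \<in> FG n" "g \<in> FG n"
    then show ?thesis
      by (simp add: lin_ext_diff lin_ext_sym cocycle)
  qed
  with step.IH have "finite (supp (cscale a x + y)) \<and> lin_ext c (cscale a x + y) = 0"
    by (simp add: lin_ext_add lin_ext_cscale)
  then show ?case by (simp add: plus_fun_def)
qed

lemma finite_supp_phi: "finite (supp (phi n f))"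
  unfolding phi_def by (simp add: finite_supp_sum)

lemma lin_ext_phi: "lin_ext c (phi n f) = (\<Sum>i=1..n. c (alpha i, f i))"
  unfolding phi_def by (simp add: lin_ext_sum lin_ext_sym)

lemma phi_injective:
  assumes R: "\<And>i. i \<in> {1..n} \<Longrightarrow> invertible (R i)"
    and eq: "eqC n R (phi n f) (phi n g)" and t: "t \<in> {1..n}"
  shows "f t = g t"
proof -
  define c where "c p = fox t R (fst p) *v snd p" for p
  have "finite (supp (phi n f - phi n g)) \<and> lin_ext c (phi n f - phi n g) = 0"
  proof (rule lin_ext_rel_space)
    show "c (h, a *s v + b *s w) = a *s c (h, v) + b *s c (h, w)" for h a b v w
      by (simp add: c_def matrix_vector_right_distrib vector_scalar_commute)
    show "c (fg_mult xi h, w) = c (h, w) + c (xi, rep R h *v w)" if "xi \<in> FG n" "h \<in> FG n" for xi h w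
      using fox_fg_mult[OF R that]
      by (simp add: c_def matrix_vector_mult_add_rdistrib matrix_vector_mul_assoc)
    show "phi n f - phi n g \<in> rel_space n R"
      using eq by (simp add: eqC_def)
  qed
  moreover have "lin_ext c (phi n h) = h t" for h
    using t by (simp add: lin_ext_phi c_def fox_alpha if_distrib if_distribR cong: if_cong)
  ultimately show ?thesis
    by (simp add: lin_ext_diff finite_supp_phi)
qed

theorem lemma4p9:
  fixes n k :: nat
    and A :: "nat \<Rightarrow> complex^'d^'d"
    and bH :: "nat \<Rightarrow> complex" and bT :: complex
  assumes k: "1 \<le> k" "k \<le> n"
    and inv: "\<And>i. i \<in> {1..n} \<Longrightarrow> invertible (A i)"
    and ss: "\<And>i. i \<in> {1..n} \<Longrightarrow> semisimple (A i)"
    and rho_delta: "rep A (delta n) = mat 1"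
    and bH0: "\<And>i. i \<in> {1..n} \<Longrightarrow> bH i \<noteq> 0"
    and bT0: "bT \<noteq> 0"
    and prod1: "bT * (\<Prod>i=1..n. bH i) = 1"
    and bT1: "bT \<noteq> 1"
  shows
    "(\<forall>f. (\<forall>i\<in>{1..n}. f i \<in> Fix (twist A bH i)) \<longrightarrow>
        eqC n (twist A bH)
          (phi n (f(k := bT *s f k)))
          (\<Sum>i=1..n. sym (mu n k (alpha i)) (f i)))
     \<and>
     (\<forall>f g. (\<forall>i\<in>{1..n}. f i \<in> Fix (twist A bH i)) \<longrightarrow>
            (\<forall>i\<in>{1..n}. g i \<in> Fix (twist A bH i)) \<longrightarrow>
            eqC n (twist A bH) (phi n f) (phi n g) \<longrightarrow>
            (\<forall>i\<in>{1..n}. f i = g i))"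
proof -
  let ?R = "twist A bH"
  have R_inv: "invertible (?R i)" if "i \<in> {1..n}" for i
    using that inv bH0 by (simp add: twist_def invertible_mult invertible_mat)
  have "bT = (\<Prod>i=1..n. inverse (bH i))"
    using prod_inversef[of bH "{1..n}"] inverse_unique[of "\<Prod>i=1..n. bH i" bT] prod1
    by (simp add: o_def mult.commute)
  then have "rep ?R (delta n) = mat bT"
    using rep_twist_delta[of n bH A] bH0 inv rho_delta by simp
  then have "rep ?R (delta_k n k) = mat bT"
    unfolding delta_k_def using k by (intro rep_deltas[OF R_inv]) auto
  moreover have "delta_k n k \<in> FG n"
    using k by (simp add: delta_k_def FG_deltas)
  ultimately show ?thesis
    using k phi_equivariant[of k n ?R bT] phi_injective[of n ?R] R_inv by auto
qed

end
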